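(* In the proposed quantized Grassmannian feedback scheme with a sphere-packing codebook (satisfying $\max_F d_c(\hat F,F)\le \Delta(1+o(2^{-N_f/N_G}))$), choosing the number of feedback bits per receiver as $$N_f=N((K-1)M-N)\log_2 P$$ keeps the interference leakage power $L_i$ of every receiver bounded by a constant independent of $P$ as $P\to\infty$.
   Context: System model: $K$ transmitter–receiver pairs, $M$ transmit and $N$ receive antennas per node, $(K-1)M\ge N$; generic channels $H_{ij}\in\mathbb{C}^{N\times M}$; truncated unitary precoders $V_j\in\mathbb{C}^{M\times d}$; inputs $x_j$ with $\mathbb{E}[x_jx_j^H]=\frac{P}{d}I_d$; $y_i=H_{ii}V_ix_i+\sum_{j\ne i}H_{ij}V_jx_j+n_i$, $n_i\sim\mathcal{CN}(0,I_N)$. $H_i=[H_{i1},\dots,H_{i,i-1},H_{i,i+1},\dots,H_{iK}]$, $V_{-i}=\mathrm{Bdiag}(V_1,\dots,V_{i-1},V_{i+1},\dots,V_K)$. Scheme: economy QR $H_i^H=F_iC_i$ ($F_i$ truncated unitary $(K-1)M\times N$, $C_i$ invertible); codebook $\mathcal S$ of $2^{N_f}$ truncated unitary $(K-1)M\times N$ matrices; $\hat F_i=\arg\min_{S\in\mathcal S}d_c(S,F_i)$ with $d_c(X,Y)=\frac1{\sqrt2}\|XX^H-YY^H\|_F$; truncated unitary $V_j$, $\tilde U_i\in\mathbb{C}^{N\times d}$ with $\tilde U_i^H\hat F_i^HV_{-i}=0$; receive filter $G_i^H$, $G_i=C_i^{-1}F_i^H\hat F_i\tilde U_i$; leakage $e_i=\sum_{j\ne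 i}G_i^HH_{ij}V_jx_j$, $L_i=\mathrm{tr}\,\mathbb{E}[e_ie_i^H]$. $N_G=2N((K-1)M-N)$, $\Delta=2/(c\,2^{N_f})^{1/N_G}$ with $c$ a positive constant depending only on $K,M,N$. *)

theory Defs
  imports "Jordan_Normal_Form.Schur_Decomposition" "HOL-Library.Landau_Symbols"
begin

abbreviation herm :: "complex mat \<Rightarrow> complex mat" where
  "herm A \<equiv> mat_adjoint A"

definition trunc_unitary :: "complex mat \<Rightarrow> nat \<Rightarrow> nat \<Rightarrow> bool" where
  "trunc_unitary X m n \<longleftrightarrow> X \<in> carrier_mat m n \<and> herm X * X = 1\<^sub>m n"

definition frob_norm :: "complex mat \<Rightarrow> real" where
  "frob_norm A = sqrt (\<Sum>r<dim_row A. \<Sum>c<dim_col A. (cmod (A $$ (r, c)))\<^sup>2)"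

definition chordal_dist :: "complex mat \<Rightarrow> complex mat \<Rightarrow> real" where
  "chordal_dist X Y = frob_norm (X * herm X - Y * herm Y) / sqrt 2"

definition trace_mat :: "complex mat \<Rightarrow> complex" where
  "trace_mat A = (\<Sum>r<dim_row A. A $$ (r, r))"

fun hcat :: "nat \<Rightarrow> complex mat list \<Rightarrow> complex mat" where
  "hcat n [] = 0\<^sub>m n 0"
| "hcat n (A # As) = (let B = hcat n As in
     four_block_mat A B (0\<^sub>m 0 (dim_col A)) (0\<^sub>m 0 (dim_col B)))"

definition others :: "nat \<Rightarrow> nat \<Rightarrow> nat list" where
  "others K i = filter (\<lambda>j. j \<noteq> i) [0..<K]"

definition H_stack :: "nat \<Rightarrow> nat \<Rightarrow> (nat \<Rightarrow> nat \<Rightarrow> complex mat) \<Rightarrow> nat \<Rightarrow> complex mat" where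
  "H_stack K N H i = hcat N (map (\<lambda>j. H i j) (others K i))"

definition V_minus :: "nat \<Rightarrow> (nat \<Rightarrow> complex mat) \<Rightarrow> nat \<Rightarrow> complex mat" where
  "V_minus K V i = diag_block_mat (map V (others K i))"

definition N_G :: "nat \<Rightarrow> nat \<Rightarrow> nat \<Rightarrow> nat" where
  "N_G K M N = 2 * N * ((K - 1) * M - N)"

definition Delta :: "nat \<Rightarrow> nat \<Rightarrow> nat \<Rightarrow> real \<Rightarrow> nat \<Rightarrow> real" where
  "Delta K M N c Nf = 2 / ((c * 2 ^ Nf) powr (1 / real (N_G K M N)))"

definition feedback_bits :: "nat \<Rightarrow> nat \<Rightarrow> nat \<Rightarrow> real \<Rightarrow> nat" where
  "feedback_bits K M N P = nat \<lceil>real (N * ((K - 1) * M - N)) * log 2 P\<rceil>"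

(* interference leakage L_i = tr E[e_i e_i^H], with independent inputs x_j,
   E[x_j x_j^H] = (P/d) I_d, e_i = \<Sum>_{j\<noteq>i} G_i^H H_ij V_j x_j *)
definition leakage :: "nat \<Rightarrow> nat \<Rightarrow> real \<Rightarrow> (nat \<Rightarrow> nat \<Rightarrow> complex mat)
    \<Rightarrow> (nat \<Rightarrow> complex mat) \<Rightarrow> complex mat \<Rightarrow> nat \<Rightarrow> complex" where
  "leakage K d P H V G i =
     (\<Sum>j\<leftarrow>others K i.
        trace_mat ((herm G * H i j * V j) * (complex_of_real (P / real d) \<cdot>\<^sub>m 1\<^sub>m d)
                   * herm (herm G * H i j * V j)))"

end

theory Submission
  imports Defs "HOL-Analysis.Convex"
begin

(* Write D = F F^H - Fh Fh^H for the difference of the projections onto the true and the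
   quantized subspace.  Since H_i^H = F_i C_i, the receive filter G_i = C_i^-1 F_i^H Fh_i U_i
   satisfies G_i^H H_i = U_i^H Fh_i^H F_i F_i^H: the unknown factor C_i cancels.  Zero-forcing
   (U_i^H Fh_i^H V_-i = 0) lets us subtract Fh_i Fh_i^H, so G_i^H H_i V_-i = U_i^H Fh_i^H D V_-i.
   The leakage is P/d times the squared Frobenius norm of this matrix, and submultiplicativity
   gives L_i <= 2 N (K-1) d P d_c(Fh_i,F_i)^2 (leakage_le_chordal).

   On the quantization side, the nearest codeword is within Delta (1 + eps N_f) of F_i, where
   P Delta^2 is bounded once N_f >= (N_G/2) log2 P, and eps N_f -> 0 as N_f -> infinity; hence
   P d_c^2 stays bounded for large P (quantization_error_bound).  In the degenerate case N_G = 0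
   the Grassmannian is a single point and d_c = 0. *)

definition frob_sq :: "complex mat \<Rightarrow> real" where
  "frob_sq A = (\<Sum>r<dim_row A. \<Sum>c<dim_col A. (cmod (A $$ (r, c)))\<^sup>2)"

lemma frob_sq_nonneg: "0 \<le> frob_sq A"
  unfolding frob_sq_def by (intro sum_nonneg) auto

lemma frob_sq_zero_mat [simp]: "frob_sq (0\<^sub>m a b) = 0"
  by (simp add: frob_sq_def)

lemma cmod_sum_mult_sq_le:
  "(cmod (\<Sum>i\<in>I. x i * y i))\<^sup>2 \<le> (\<Sum>i\<in>I. (cmod (x i))\<^sup>2) * (\<Sum>i\<in>I. (cmod (y i))\<^sup>2)"
proof -
  have "cmod (\<Sum>i\<in>I. x i * y i) \<le> (\<Sum>i\<in>I. cmod (x i) * cmod (y i))"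
    by (metis (no_types, lifting) norm_mult norm_sum sum.cong)
  hence "(cmod (\<Sum>i\<in>I. x i * y i))\<^sup>2 \<le> (\<Sum>i\<in>I. cmod (x i) * cmod (y i))\<^sup>2"
    by (intro power_mono) auto
  also have "\<dots> \<le> (\<Sum>i\<in>I. (cmod (x i))\<^sup>2) * (\<Sum>i\<in>I. (cmod (y i))\<^sup>2)"
    by (rule Cauchy_Schwarz_ineq_sum)
  finally show ?thesis .
qed

lemma frob_sq_mult_le:
  assumes A: "A \<in> carrier_mat n m" and B: "B \<in> carrier_mat m k"
  shows "frob_sq (A * B) \<le> frob_sq A * frob_sq B"
proof -
  have "frob_sq (A * B) = (\<Sum>i<n. \<Sum>j<k. (cmod (\<Sum>l<m. A $$ (i,l) * B $$ (l,j)))\<^sup>2)"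
    unfolding frob_sq_def using A B
    by (intro sum.cong refl) (auto simp: scalar_prod_def lessThan_atLeast0)
  also have "\<dots> \<le> (\<Sum>i<n. \<Sum>j<k. (\<Sum>l<m. (cmod (A $$ (i,l)))\<^sup>2) * (\<Sum>l<m. (cmod (B $$ (l,j)))\<^sup>2))"
    by (intro sum_mono cmod_sum_mult_sq_le)
  also have "\<dots> = (\<Sum>i<n. \<Sum>l<m. (cmod (A $$ (i,l)))\<^sup>2) * (\<Sum>j<k. \<Sum>l<m. (cmod (B $$ (l,j)))\<^sup>2)"
    by (rule sum_product[symmetric])
  also have "\<dots> = frob_sq A * frob_sq B"
    unfolding frob_sq_def using A B by (simp add: sum.swap[of _ "{..<k}"])
  finally show ?thesis .
qed

lemma frob_sq_mult4_le:
  assumes "A \<in> carrier_mat n1 n2" "B \<in> carrier_mat n2 n3" "C \<in> carrier_mat n3 n4"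
    "D \<in> carrier_mat n4 n5"
  shows "frob_sq (A * B * C * D) \<le> frob_sq A * frob_sq B * frob_sq C * frob_sq D"
proof -
  have "frob_sq (A * B * C * D) \<le> frob_sq (A * B * C) * frob_sq D"
    using assms by (intro frob_sq_mult_le[of _ n1 n4]) auto
  also have "\<dots> \<le> (frob_sq (A * B) * frob_sq C) * frob_sq D"
    using assms by (intro mult_right_mono frob_sq_mult_le[of _ n1 n3] frob_sq_nonneg) auto
  also have "\<dots> \<le> (frob_sq A * frob_sq B * frob_sq C) * frob_sq D"
    using assms by (intro mult_right_mono frob_sq_mult_le[of _ n1 n2] frob_sq_nonneg) auto
  finally show ?thesis .
qed

lemma frob_sq_minus_commute:
  "A \<in> carrier_mat n k \<Longrightarrow> B \<in> carrier_mat n k \<Longrightarrow> frob_sq (A - B) = frob_sq (B - A)"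
  unfolding frob_sq_def by (intro sum.cong refl) (auto simp: norm_minus_commute)

lemma herm_altdef: "herm A = mat (dim_col A) (dim_row A) (\<lambda>(i,j). cnj (A $$ (j,i)))"
  unfolding mat_adjoint_def by (rule eq_matI) (auto simp: mat_of_rows_def)

lemma herm_dims [simp]: "dim_row (herm A) = dim_col A" "dim_col (herm A) = dim_row A"
  by (simp_all add: herm_altdef)

lemma herm_index [simp]:
  "i < dim_col A \<Longrightarrow> j < dim_row A \<Longrightarrow> herm A $$ (i,j) = cnj (A $$ (j,i))"
  by (simp add: herm_altdef)

lemma herm_carrier [simp]: "A \<in> carrier_mat n m \<Longrightarrow> herm A \<in> carrier_mat m n"
  by auto

lemma herm_herm [simp]: "herm (herm A) = A"
  by (rule eq_matI) auto

lemma herm_one [simp]: "herm (1\<^sub>m n) = 1\<^sub>m n"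
  by (rule eq_matI) auto

lemma herm_mult:
  assumes "A \<in> carrier_mat n m" "B \<in> carrier_mat m k"
  shows "herm (A * B) = herm B * herm A"
  using assms by (intro eq_matI) (auto simp: scalar_prod_def mult.commute)

lemma frob_sq_herm [simp]: "frob_sq (herm A) = frob_sq A"
  unfolding frob_sq_def by (simp add: sum.swap[of _ "{..<dim_row A}"])

lemma frob_sq_as_trace:
  assumes "X \<in> carrier_mat n k"
  shows "frob_sq X = (\<Sum>c<k. Re ((herm X * X) $$ (c,c)))"
proof -
  have "frob_sq X = (\<Sum>c<k. \<Sum>r<n. (cmod (X $$ (r,c)))\<^sup>2)"
    unfolding frob_sq_def using assms by (simp add: sum.swap[of _ "{..<k}"])
  also have "\<dots> = (\<Sum>c<k. Re ((herm X * X) $$ (c,c)))"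
  proof (intro sum.cong refl)
    fix c assume "c \<in> {..<k}"
    hence "(herm X * X) $$ (c,c) = (\<Sum>r<n. cnj (X $$ (r,c)) * X $$ (r,c))"
      using assms by (simp add: scalar_prod_def lessThan_atLeast0)
    moreover have "\<And>z. Re (cnj z * z) = (cmod z)\<^sup>2"
      using cmod_power2 by (simp add: power2_eq_square)
    ultimately show "(\<Sum>r<n. (cmod (X $$ (r,c)))\<^sup>2) = Re ((herm X * X) $$ (c,c))"
      by (simp only: Re_sum)
  qed
  finally show ?thesis .
qed

lemma frob_sq_trunc_unitary:
  assumes "trunc_unitary X n k" shows "frob_sq X = real k"
  using assms frob_sq_as_trace[of X n k] by (simp add: trunc_unitary_def)

lemma trace_scaled_gram:
  assumes "A \<in> carrier_mat r k"
  shows "Re (trace_mat (A * (complex_of_real s \<cdot>\<^sub>m 1\<^sub>m k) * herm A)) = s * frob_sq A"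
proof -
  have "A * (complex_of_real s \<cdot>\<^sub>m 1\<^sub>m k) * herm A = complex_of_real s \<cdot>\<^sub>m (A * herm A)"
    using assms by (metis herm_carrier mult_smult_assoc_mat mult_smult_distrib
        one_carrier_mat right_mult_one_mat)
  hence "Re (trace_mat (A * (complex_of_real s \<cdot>\<^sub>m 1\<^sub>m k) * herm A))
      = s * (\<Sum>i<r. Re ((A * herm A) $$ (i,i)))"
    using assms by (simp add: trace_mat_def Re_sum sum_distrib_left)
  also have "\<dots> = s * frob_sq A"
    using frob_sq_as_trace[of "herm A" k r] assms by simp
  finally show ?thesis .
qed

lemma chordal_dist_sq: "(chordal_dist X Y)\<^sup>2 = frob_sq (X * herm X - Y * herm Y) / 2"
  unfolding chordal_dist_def frob_norm_def frob_sq_def[symmetric]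
  by (simp add: power_divide frob_sq_nonneg)

lemma chordal_dist_nonneg: "0 \<le> chordal_dist X Y"
  unfolding chordal_dist_def frob_norm_def frob_sq_def[symmetric] by (simp add: frob_sq_nonneg)

(* If N = 0 or m = N the Grassmannian of N-planes in C^m is a point: every truncated
   unitary F has F F^H = I (or is empty), so all chordal distances vanish. *)
lemma chordal_dist_degenerate:
  assumes F: "trunc_unitary F m N" and Fh: "trunc_unitary Fh m N" and deg: "N = 0 \<or> m = N"
  shows "chordal_dist Fh F = 0"
proof -
  have Fc: "F \<in> carrier_mat m N" and Fhc: "Fh \<in> carrier_mat m N"
    using F Fh by (auto simp: trunc_unitary_def)
  have "Fh * herm Fh = F * herm F"
  proof (cases "N = 0")
    case True
    then show ?thesis using Fc Fhc by (intro eq_matI) (auto simp: scalar_prod_def)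
  next
    case False
    hence "m = N" using deg by simp
    hence "F * herm F = 1\<^sub>m N" and "Fh * herm Fh = 1\<^sub>m N"
      using F Fh by (auto intro: mat_mult_left_right_inverse simp: trunc_unitary_def)
    then show ?thesis by simp
  qed
  thus ?thesis
    using Fhc by (simp add: chordal_dist_def frob_norm_def)
qed

lemma sum_lessThan_add:
  "(\<Sum>i<a+b. (f::nat\<Rightarrow>real) i) = (\<Sum>i<a. f i) + (\<Sum>i<b. f (a + i))"
proof -
  have "(\<Sum>i<a+b. f i) = (\<Sum>i<a. f i) + (\<Sum>i\<in>{a..<a+b}. f i)"
    using sum.atLeastLessThan_concat[of 0 a "a+b" f] by (simp add: lessThan_atLeast0)
  also have "(\<Sum>i\<in>{a..<a+b}. f i) = (\<Sum>i<b. f (a + i))"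
    using sum.shift_bounds_nat_ivl[of f 0 a b] by (simp add: lessThan_atLeast0 add.commute)
  finally show ?thesis .
qed

lemma frob_sq_four_block:
  assumes "A \<in> carrier_mat r1 c1" "B \<in> carrier_mat r1 c2"
    "C \<in> carrier_mat r2 c1" "D \<in> carrier_mat r2 c2"
  shows "frob_sq (four_block_mat A B C D) = frob_sq A + frob_sq B + frob_sq C + frob_sq D"
  using assms unfolding frob_sq_def by (simp add: sum_lessThan_add sum.distrib)

lemma frob_sq_diag_block: "frob_sq (diag_block_mat Vs) = (\<Sum>V\<leftarrow>Vs. frob_sq V)"
proof (induction Vs)
  case (Cons V Vs)
  let ?D = "diag_block_mat Vs"
  have "frob_sq (diag_block_mat (V # Vs)) = frob_sq (four_block_mat V
      (0\<^sub>m (dim_row V) (dim_col ?D)) (0\<^sub>m (dim_row ?D) (dim_col V)) ?D)"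
    by (simp add: Let_def)
  also have "\<dots> = frob_sq V + frob_sq ?D"
    by (subst frob_sq_four_block[of V "dim_row V" "dim_col V" _ "dim_col ?D" _ "dim_row ?D"]) auto
  finally show ?case using Cons by simp
qed simp

lemma hcat_carrier:
  "\<forall>A\<in>set As. dim_row A = n \<Longrightarrow> hcat n As \<in> carrier_mat n (\<Sum>A\<leftarrow>As. dim_col A)"
  by (induction As) (auto simp: Let_def)

lemma mult_hcat:
  assumes X: "X \<in> carrier_mat r n" and As: "\<forall>A\<in>set As. dim_row A = n"
  shows "X * hcat n As = hcat r (map ((*) X) As)"
  using As
proof (induction As)
  case (Cons A As)
  let ?B = "hcat n As"
  have "?B \<in> carrier_mat n (\<Sum>A\<leftarrow>As. dim_col A)" and "dim_row A = n"
    using hcat_carrier Cons.prems by auto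
  hence "X * four_block_mat A ?B (0\<^sub>m 0 (dim_col A)) (0\<^sub>m 0 (dim_col ?B))
      = four_block_mat (X * A) (X * ?B) (0\<^sub>m 0 (dim_col (X * A))) (0\<^sub>m 0 (dim_col (X * ?B)))"
    using X by (intro eq_matI) (auto simp: scalar_prod_def)
  then show ?case using Cons by (simp add: Let_def)
qed (use X in auto)

(* A row of blocks times a block diagonal is the row of the blockwise products, so its
   squared Frobenius norm is the sum over the blocks. *)
lemma frob_sq_hcat_diag:
  assumes "\<forall>j\<in>set js. A j \<in> carrier_mat r (dim_row (B j))"
  shows "frob_sq (hcat r (map A js) * diag_block_mat (map B js)) = (\<Sum>j\<leftarrow>js. frob_sq (A j * B j))"
  using assms
proof (induction js)
  case Nil
  then show ?case by (simp add: frob_sq_def)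
next
  case (Cons j js)
  let ?Y = "A j" and ?V = "B j"
  let ?R = "hcat r (map A js)" and ?D = "diag_block_mat (map B js)"
  have Y: "?Y \<in> carrier_mat r (dim_row ?V)" using Cons.prems by simp
  have "(\<Sum>j\<leftarrow>js. dim_col (A j)) = (\<Sum>j\<leftarrow>js. dim_row (B j))"
    using Cons.prems by (intro arg_cong[where f = sum_list] map_cong) auto
  hence R: "?R \<in> carrier_mat r (dim_row ?D)"
    using hcat_carrier[of "map A js" r] Cons.prems by (auto simp: dim_diag_block_mat o_def)
  have "hcat r (map A (j # js)) * diag_block_mat (map B (j # js))
     = four_block_mat ?Y ?R (0\<^sub>m 0 (dim_row ?V)) (0\<^sub>m 0 (dim_row ?D))
       * four_block_mat ?V (0\<^sub>m (dim_row ?V) (dim_col ?D)) (0\<^sub>m (dim_row ?D) (dim_col ?V)) ?D"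
    using Y R by (simp add: Let_def)
  also have "\<dots> = four_block_mat (?Y * ?V) (?R * ?D) (0\<^sub>m 0 (dim_col ?V)) (0\<^sub>m 0 (dim_col ?D))"
  proof -
    have "four_block_mat ?Y ?R (0\<^sub>m 0 (dim_row ?V)) (0\<^sub>m 0 (dim_row ?D))
       * four_block_mat ?V (0\<^sub>m (dim_row ?V) (dim_col ?D)) (0\<^sub>m (dim_row ?D) (dim_col ?V)) ?D
      = four_block_mat (?Y * ?V + ?R * 0\<^sub>m (dim_row ?D) (dim_col ?V))
          (?Y * 0\<^sub>m (dim_row ?V) (dim_col ?D) + ?R * ?D)
          (0\<^sub>m 0 (dim_row ?V) * ?V + 0\<^sub>m 0 (dim_row ?D) * 0\<^sub>m (dim_row ?D) (dim_col ?V))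
          (0\<^sub>m 0 (dim_row ?V) * 0\<^sub>m (dim_row ?V) (dim_col ?D) + 0\<^sub>m 0 (dim_row ?D) * ?D)"
      using Y R by (intro mult_four_block_mat) auto
    also have "\<dots> = four_block_mat (?Y * ?V) (?R * ?D) (0\<^sub>m 0 (dim_col ?V)) (0\<^sub>m 0 (dim_col ?D))"
      using Y R by (intro arg_cong4[where f = four_block_mat] eq_matI) auto
    finally show ?thesis .
  qed
  finally have "frob_sq (hcat r (map A (j # js)) * diag_block_mat (map B (j # js)))
      = frob_sq (?Y * ?V) + frob_sq (?R * ?D)"
    using Y R by (simp add: frob_sq_four_block[of _ r "dim_col ?V" _ "dim_col ?D" _ 0])
  then show ?case using Cons by simp
qed

lemma Re_sum_list: "Re (sum_list xs) = sum_list (map Re xs)"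
  by (induction xs) auto

lemma others_set: "set (others K i) = {j. j < K \<and> j \<noteq> i}"
  unfolding others_def by auto

lemma length_others:
  assumes "i < K" shows "length (others K i) = K - 1"
proof -
  have "{j. j < K \<and> j \<noteq> i} = {..<K} - {i}" by auto
  moreover have "distinct (others K i)" unfolding others_def by simp
  ultimately show ?thesis
    using distinct_card[of "others K i"] assms by (simp add: others_set)
qed

lemma V_minus_carrier:
  assumes "i < K" and V: "\<forall>j<K. V j \<in> carrier_mat M d"
  shows "V_minus K V i \<in> carrier_mat ((K - 1) * M) ((K - 1) * d)"
proof -
  have "(\<Sum>j\<leftarrow>others K i. dim_row (V j)) = (\<Sum>j\<leftarrow>others K i. M)"
    and "(\<Sum>j\<leftarrow>others K i. dim_col (V j)) = (\<Sum>j\<leftarrow>others K i. d)"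
    using V by (auto intro!: arg_cong[where f = sum_list] map_cong simp: others_set)
  then show ?thesis
    using assms unfolding V_minus_def
    by (intro carrier_matI) (simp_all add: dim_diag_block_mat o_def sum_list_triv length_others)
qed

lemma frob_sq_V_minus:
  assumes "i < K" and V: "\<forall>j<K. trunc_unitary (V j) M d"
  shows "frob_sq (V_minus K V i) = real ((K - 1) * d)"
proof -
  have "(\<Sum>j\<leftarrow>others K i. frob_sq (V j)) = (\<Sum>j\<leftarrow>others K i. real d)"
    using V by (auto intro!: arg_cong[where f = sum_list] map_cong frob_sq_trunc_unitary
        simp: others_set)
  then show ?thesis
    using assms by (simp add: V_minus_def frob_sq_diag_block o_def sum_list_triv length_others)
qed

lemma leakage_as_frob_sq:
  assumes i: "i < K" and H: "\<forall>j<K. H i j \<in> carrier_mat N M"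
    and V: "\<forall>j<K. V j \<in> carrier_mat M d" and G: "G \<in> carrier_mat N d"
  shows "Re (leakage K d P H V G i)
      = P / real d * frob_sq (herm G * H_stack K N H i * V_minus K V i)"
proof -
  let ?os = "others K i"
  have blocks: "\<And>j. j \<in> set ?os \<Longrightarrow> H i j \<in> carrier_mat N M \<and> V j \<in> carrier_mat M d"
    using H V by (simp add: others_set)
  have "Re (leakage K d P H V G i) = (\<Sum>j\<leftarrow>?os. P / real d * frob_sq (herm G * H i j * V j))"
    unfolding leakage_def Re_sum_list map_map o_def
    using G by (intro arg_cong[where f = sum_list] map_cong refl trace_scaled_gram[where r = d and k = d])
      (auto dest!: blocks)
  also have "\<dots> = P / real d * (\<Sum>j\<leftarrow>?os. frob_sq (herm G * H i j * V j))"
    by (rule sum_list_const_mult)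
  also have "(\<Sum>j\<leftarrow>?os. frob_sq (herm G * H i j * V j))
      = frob_sq (hcat d (map (\<lambda>j. herm G * H i j) ?os) * diag_block_mat (map V ?os))"
    using G by (intro frob_sq_hcat_diag[symmetric]) (auto dest!: blocks)
  also have "hcat d (map (\<lambda>j. herm G * H i j) ?os) = herm G * H_stack K N H i"
    unfolding H_stack_def using G by (subst mult_hcat[of _ d N]) (auto simp: o_def dest!: blocks)
  finally show ?thesis by (simp add: V_minus_def)
qed

(* The unknown QR factor cancels: G_i^H H_i = U^H Fh^H F F^H for G_i = C^-1 F^H Fh U. *)
lemma filter_times_channel:
  assumes F: "F \<in> carrier_mat m N" and Fh: "Fh \<in> carrier_mat m N" and U: "U \<in> carrier_mat N d"
    and C: "C \<in> carrier_mat N N" and Ci: "Cinv \<in> carrier_mat N N" and CCi: "C * Cinv = 1\<^sub>m N"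
    and Hs: "herm Hs = F * C"
  shows "herm (Cinv * herm F * Fh * U) * Hs = herm U * herm Fh * F * herm F"
proof -
  let ?u = "herm U" and ?fh = "herm Fh" and ?f = "herm F" and ?ci = "herm Cinv" and ?c = "herm C"
  have u: "?u \<in> carrier_mat d N" and fh: "?fh \<in> carrier_mat N m" and f: "?f \<in> carrier_mat N m"
    and ci: "?ci \<in> carrier_mat N N" and c: "?c \<in> carrier_mat N N"
    using assms by auto
  have "Cinv * herm F \<in> carrier_mat N m" and "Cinv * herm F * Fh \<in> carrier_mat N N"
    using Ci F Fh by auto
  hence G: "herm (Cinv * herm F * Fh * U) = ?u * (?fh * (F * ?ci))"
    using Ci F Fh U herm_mult[of "Cinv * herm F * Fh" N N U d] herm_mult[of "Cinv * herm F" N m Fh N]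
      herm_mult[of Cinv N N "herm F" m] by simp
  have HsE: "Hs = ?c * ?f"
    using arg_cong[OF Hs, of herm] herm_mult[OF F C] by simp
  have cic: "?ci * ?c = 1\<^sub>m N"
    using herm_mult[OF C Ci] CCi by simp
  have "(F * ?ci) * (?c * ?f) = F * ((?ci * ?c) * ?f)"
    using F ci c f by (simp add: assoc_mult_mat[of F m N ?ci N "?c * ?f" m]
        assoc_mult_mat[of ?ci N N ?c N ?f m])
  also have "\<dots> = F * ?f" using cic f by (simp add: left_mult_one_mat[OF f])
  finally have inner: "(F * ?ci) * (?c * ?f) = F * ?f" .
  have "?u * (?fh * (F * ?ci)) * (?c * ?f) = ?u * (?fh * ((F * ?ci) * (?c * ?f)))"
    using u fh F ci c f
    by (simp add: assoc_mult_mat[of ?u d N "?fh * (F * ?ci)" N "?c * ?f" m]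
        assoc_mult_mat[of ?fh N m "F * ?ci" N "?c * ?f" m])
  also have "\<dots> = ?u * ?fh * F * ?f"
  proof -
    have "?fh * (F * ?f) = ?fh * F * ?f" using fh F f by (rule assoc_mult_mat[symmetric])
    moreover have "?u * (?fh * F * ?f) = ?u * (?fh * F) * ?f"
      using u fh F f by (intro assoc_mult_mat[symmetric]) auto
    moreover have "?u * (?fh * F) = ?u * ?fh * F" using u fh F by (rule assoc_mult_mat[symmetric])
    ultimately show ?thesis by (simp only: inner)
  qed
  finally show ?thesis using G HsE by simp
qed

(* Zero-forcing on the quantized subspace lets us subtract Fh Fh^H: only the projection
   error D = F F^H - Fh Fh^H survives. *)
lemma projection_difference:
  assumes F: "F \<in> carrier_mat m N" and Fh: "Fh \<in> carrier_mat m N" and FhFh: "herm Fh * Fh = 1\<^sub>m N"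
    and U: "U \<in> carrier_mat N d" and Vm: "Vm \<in> carrier_mat m q"
    and orth: "herm U * herm Fh * Vm = 0\<^sub>m d q"
  shows "herm U * herm Fh * F * herm F * Vm = herm U * herm Fh * (F * herm F - Fh * herm Fh) * Vm"
proof -
  let ?a = "herm U * herm Fh"
  have a: "?a \<in> carrier_mat d m" using U Fh by auto
  have "?a * Fh = herm U * (herm Fh * Fh)"
    using U Fh by (simp add: assoc_mult_mat[of "herm U" d N "herm Fh" m Fh N])
  also have "\<dots> = herm U" using U FhFh by simp
  finally have "?a * (Fh * herm Fh) * Vm = 0\<^sub>m d q"
    using a Fh orth by (simp add: assoc_mult_mat[of ?a d m Fh N "herm Fh" m, symmetric])
  moreover have "?a * (F * herm F - Fh * herm Fh) * Vm
      = ?a * (F * herm F) * Vm - ?a * (Fh * herm Fh) * Vm"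
    using a F Fh Vm
    by (simp add: mult_minus_distrib_mat[of ?a d m _ m] minus_mult_distrib_mat[of _ d m _ Vm q])
  moreover have "?a * (F * herm F) = ?a * F * herm F"
    using a F by (simp add: assoc_mult_mat[of ?a d m F N "herm F" m])
  moreover have "?a * F * herm F * Vm - 0\<^sub>m d q = ?a * F * herm F * Vm"
    using a F Vm by (intro eq_matI) auto
  ultimately show ?thesis by simp
qed

lemma leakage_le_chordal:
  fixes K M N d :: nat and H :: "nat \<Rightarrow> nat \<Rightarrow> complex mat"
  assumes i: "i < K" and chan: "\<forall>i<K. \<forall>j<K. H i j \<in> carrier_mat N M"
    and F: "trunc_unitary F ((K - 1) * M) N"
    and C: "C \<in> carrier_mat N N" and Ci: "Cinv \<in> carrier_mat N N" and CCi: "C * Cinv = 1\<^sub>m N"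
    and Hs: "herm (H_stack K N H i) = F * C"
    and Fh: "trunc_unitary Fh ((K - 1) * M) N"
    and V: "\<forall>j<K. trunc_unitary (V j) M d" and U: "trunc_unitary U N d"
    and orth: "herm U * herm Fh * V_minus K V i = 0\<^sub>m d ((K - 1) * d)"
    and P: "P \<ge> 0"
  shows "Re (leakage K d P H V (Cinv * herm F * Fh * U) i)
     \<le> 2 * real N * real (K - 1) * real d * (P * (chordal_dist Fh F)\<^sup>2)"
proof -
  define m where "m = (K - 1) * M"
  define Vm where "Vm = V_minus K V i"
  define D where "D = F * herm F - Fh * herm Fh"
  have Fc: "F \<in> carrier_mat m N" and Fhc: "Fh \<in> carrier_mat m N" and FhFh: "herm Fh * Fh = 1\<^sub>m N"
    and Uc: "U \<in> carrier_mat N d" and Vc: "\<forall>j<K. V j \<in> carrier_mat M d"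
    using F Fh U V by (auto simp: trunc_unitary_def m_def)
  have Vmc: "Vm \<in> carrier_mat m ((K - 1) * d)"
    using V_minus_carrier[OF i Vc] by (simp add: Vm_def m_def)
  have Dc: "D \<in> carrier_mat m m" using Fc Fhc by (auto simp: D_def)
  have "Re (leakage K d P H V (Cinv * herm F * Fh * U) i)
      = P / real d * frob_sq (herm (Cinv * herm F * Fh * U) * H_stack K N H i * Vm)"
    unfolding Vm_def using i chan Vc Ci Fc Fhc Uc by (intro leakage_as_frob_sq) auto
  also have "herm (Cinv * herm F * Fh * U) * H_stack K N H i * Vm = herm U * herm Fh * D * Vm"
    unfolding D_def filter_times_channel[OF Fc Fhc Uc C Ci CCi Hs]
    using Fc Fhc FhFh Uc Vmc orth by (intro projection_difference) (auto simp: Vm_def)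
  finally have leak: "Re (leakage K d P H V (Cinv * herm F * Fh * U) i)
      = P / real d * frob_sq (herm U * herm Fh * D * Vm)" .
  have "frob_sq (herm U * herm Fh * D * Vm)
      \<le> frob_sq (herm U) * frob_sq (herm Fh) * frob_sq D * frob_sq Vm"
    using Uc Fhc Dc Vmc by (intro frob_sq_mult4_le) auto
  also have "\<dots> = real d * real N * (2 * (chordal_dist Fh F)\<^sup>2) * real ((K - 1) * d)"
    using frob_sq_trunc_unitary[OF U] frob_sq_trunc_unitary[OF Fh] frob_sq_V_minus[OF i V]
      frob_sq_minus_commute[of "Fh * herm Fh" m m "F * herm F"] Fc Fhc
    by (simp add: D_def Vm_def chordal_dist_sq)
  finally have "P / real d * frob_sq (herm U * herm Fh * D * Vm)
      \<le> P / real d * (real d * real N * (2 * (chordal_dist Fh F)\<^sup>2) * real ((K - 1) * d))"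
    using P by (intro mult_left_mono) auto
  also have "\<dots> \<le> 2 * real N * real (K - 1) * real d * (P * (chordal_dist Fh F)\<^sup>2)"
    by (cases "d = 0") (simp_all add: field_simps)
  finally show ?thesis using leak by simp
qed

lemma feedback_bits_ge:
  assumes "P \<ge> 1"
  shows "real (N_G K M N) / 2 * log 2 P \<le> real (feedback_bits K M N P)"
proof -
  define x where "x = real (N * ((K - 1) * M - N)) * log 2 P"
  have "0 \<le> x" using assms by (simp add: x_def)
  hence "x \<le> real (feedback_bits K M N P)"
    unfolding feedback_bits_def x_def[symmetric] by linarith
  thus ?thesis by (simp add: x_def N_G_def)
qed

lemma feedback_bits_at_top:
  assumes "N_G K M N > 0"
  shows "filterlim (feedback_bits K M N) at_top at_top"
  unfolding filterlim_at_top
proof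
  fix n :: nat
  have "1 \<le> N * ((K - 1) * M - N)"
    using assms by (simp add: N_G_def Suc_le_eq)
  hence "2 \<le> N_G K M N" by (simp add: N_G_def)
  hence NG: "real (N_G K M N) / 2 \<ge> 1" by simp
  show "\<forall>\<^sub>F P in at_top. n \<le> feedback_bits K M N P"
    using eventually_ge_at_top[of "2 ^ n :: real"]
  proof eventually_elim
    case (elim P)
    have P1: "1 \<le> P" using elim one_le_power[of "2::real" n] by linarith
    have "log 2 ((2::real) ^ n) \<le> log 2 P"
      using elim P1 by (subst log_le_cancel_iff) auto
    hence "real n \<le> log 2 P" by (simp add: log_nat_power)
    also have "\<dots> \<le> real (N_G K M N) / 2 * log 2 P"
      using mult_right_mono[OF NG, of "log 2 P"] P1 by simp
    also have "\<dots> \<le> real (feedback_bits K M N P)"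
      using P1 by (rule feedback_bits_ge)
    finally show ?case by simp
  qed
qed

lemma P_Delta_sq_le:
  assumes NG: "N_G K M N > 0" and c: "c > 0" and P: "P > 0"
    and Nf: "real (N_G K M N) / 2 * log 2 P \<le> real Nf"
  shows "P * (Delta K M N c Nf)\<^sup>2 \<le> 4 / c powr (2 / real (N_G K M N))"
proof -
  define g where "g = real (N_G K M N)"
  have g: "g > 0" using NG by (simp add: g_def)
  have "(Delta K M N c Nf)\<^sup>2 = 4 / (c * 2 ^ Nf) powr (2 / g)"
    using c by (simp add: Delta_def g_def power_divide powr_powr[symmetric] power2_eq_square
        flip: powr_add)
  also have "(c * 2 ^ Nf) powr (2 / g) = c powr (2 / g) * 2 powr (real Nf * 2 / g)"
    using c by (simp add: powr_mult powr_realpow[symmetric] powr_powr)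
  finally have Delta_sq: "(Delta K M N c Nf)\<^sup>2 = 4 / (c powr (2 / g) * 2 powr (real Nf * 2 / g))" .
  have "log 2 P \<le> real Nf * 2 / g" using Nf g by (simp add: g_def field_simps)
  hence "2 powr (log 2 P) \<le> 2 powr (real Nf * 2 / g)" by (intro powr_mono) auto
  hence "P \<le> 2 powr (real Nf * 2 / g)" using P by simp
  hence "P * (Delta K M N c Nf)\<^sup>2 \<le> 2 powr (real Nf * 2 / g) * (Delta K M N c Nf)\<^sup>2"
    by (intro mult_right_mono) auto
  also have "\<dots> = 4 / c powr (2 / g)"
    unfolding Delta_sq using c by simp
  finally show ?thesis by (simp add: g_def)
qed

lemma eventually_abs_le_1:
  assumes "eps \<in> o(\<lambda>n. 2 powr (- (real n / g)))" and "g \<ge> 0"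
  shows "\<forall>\<^sub>F n in at_top. \<bar>eps n\<bar> \<le> 1"
proof -
  have "\<forall>\<^sub>F n in at_top. norm (eps n) \<le> 1 * norm ((2::real) powr (- (real n / g)))"
    using assms(1) by (rule landau_o.smallD) simp
  thus ?thesis
  proof eventually_elim
    case (elim n)
    have "(2::real) powr (- (real n / g)) \<le> 2 powr 0"
      using assms(2) by (intro powr_mono) auto
    thus ?case using elim by simp
  qed
qed

definition nearest_codeword :: "complex mat set \<Rightarrow> complex mat \<Rightarrow> complex mat \<Rightarrow> bool" where
  "nearest_codeword S F Fh \<longleftrightarrow> Fh \<in> S \<and> (\<forall>X\<in>S. chordal_dist Fh F \<le> chordal_dist X F)"

lemma quantization_error_bound:
  fixes K M N :: nat and c :: real and S :: "nat \<Rightarrow> complex mat set" and eps :: "nat \<Rightarrow> real"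
  assumes dims: "(K - 1) * M \<ge> N" and c: "c > 0"
    and unitary: "\<forall>Nf. \<forall>X\<in>S Nf. trunc_unitary X ((K - 1) * M) N"
    and covering: "\<forall>Nf F. trunc_unitary F ((K - 1) * M) N \<longrightarrow>
        (\<exists>X\<in>S Nf. chordal_dist X F \<le> Delta K M N c Nf * (1 + eps Nf))"
    and eps_small: "eps \<in> o(\<lambda>Nf. 2 powr (- (real Nf / real (N_G K M N))))"
  shows "\<exists>B. \<forall>\<^sub>F P in at_top. \<forall>F Fh. trunc_unitary F ((K - 1) * M) N
      \<and> nearest_codeword (S (feedback_bits K M N P)) F Fh \<longrightarrow> P * (chordal_dist Fh F)\<^sup>2 \<le> B"
proof (cases "N_G K M N = 0")
  case True
  hence "N = 0 \<or> (K - 1) * M = N" using dims by (auto simp: N_G_def)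
  hence "chordal_dist Fh F = 0"
    if "trunc_unitary F ((K - 1) * M) N" and "Fh \<in> S Nf" for F Fh Nf
    using that unitary by (blast intro: chordal_dist_degenerate)
  thus ?thesis by (intro exI[of _ 0] always_eventually) (auto simp: nearest_codeword_def)
next
  case False
  hence NG: "N_G K M N > 0" by simp
  have "\<forall>\<^sub>F P in at_top. \<bar>eps (feedback_bits K M N P)\<bar> \<le> 1"
    using eventually_abs_le_1[OF eps_small] feedback_bits_at_top[OF NG]
    by (rule eventually_compose_filterlim) simp
  hence "\<forall>\<^sub>F P in at_top. \<bar>eps (feedback_bits K M N P)\<bar> \<le> 1 \<and> P \<ge> 1"
    by (intro eventually_conj eventually_ge_at_top)
  hence "\<forall>\<^sub>F P in at_top. \<forall>F Fh. trunc_unitary F ((K - 1) * M) N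
      \<and> nearest_codeword (S (feedback_bits K M N P)) F Fh
      \<longrightarrow> P * (chordal_dist Fh F)\<^sup>2 \<le> 16 / c powr (2 / real (N_G K M N))"
  proof (rule eventually_mono, intro allI impI)
    fix P F Fh
    define Nf where "Nf = feedback_bits K M N P"
    assume "\<bar>eps (feedback_bits K M N P)\<bar> \<le> 1 \<and> 1 \<le> P"
    hence eps1: "\<bar>1 + eps Nf\<bar> \<le> 2" and P1: "1 \<le> P" by (auto simp: Nf_def)
    assume "trunc_unitary F ((K - 1) * M) N \<and> nearest_codeword (S Nf) F Fh"
    then have dist: "chordal_dist Fh F \<le> Delta K M N c Nf * (1 + eps Nf)"
      using covering unfolding nearest_codeword_def by force
    have "(chordal_dist Fh F)\<^sup>2 \<le> (Delta K M N c Nf)\<^sup>2 * (1 + eps Nf)\<^sup>2"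
      using power_mono[OF dist chordal_dist_nonneg, of 2] by (simp add: power_mult_distrib)
    also have "\<dots> \<le> (Delta K M N c Nf)\<^sup>2 * 4"
      using eps1 power_mono[of "\<bar>1 + eps Nf\<bar>" 2 2] by (intro mult_left_mono) auto
    finally have "P * (chordal_dist Fh F)\<^sup>2 \<le> 4 * (P * (Delta K M N c Nf)\<^sup>2)"
      using P1 by (simp add: mult_left_mono)
    also have "\<dots> \<le> 4 * (4 / c powr (2 / real (N_G K M N)))"
      using P_Delta_sq_le[OF NG c _ feedback_bits_ge[OF P1]] P1 by (simp add: Nf_def)
    finally show "P * (chordal_dist Fh F)\<^sup>2 \<le> 16 / c powr (2 / real (N_G K M N))" by simp
  qed
  thus ?thesis by blast
qed

theorem corollary1:
  fixes K M N d :: nat and c :: real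
    and H :: "nat \<Rightarrow> nat \<Rightarrow> complex mat"
    and S :: "nat \<Rightarrow> complex mat set"
    and eps :: "nat \<Rightarrow> real"
  assumes dims: "(K - 1) * M \<ge> N"
    and chan: "\<forall>i<K. \<forall>j<K. H i j \<in> carrier_mat N M"
    and c_pos: "c > 0"
    and codebook: "\<forall>Nf. finite (S Nf) \<and> card (S Nf) = 2 ^ Nf
        \<and> (\<forall>X\<in>S Nf. trunc_unitary X ((K - 1) * M) N)
        \<and> (\<forall>F. trunc_unitary F ((K - 1) * M) N \<longrightarrow>
              (\<exists>X\<in>S Nf. chordal_dist X F \<le> Delta K M N c Nf * (1 + eps Nf)))"
    and eps_small: "eps \<in> o(\<lambda>Nf. 2 powr (- (real Nf / real (N_G K M N))))"
  shows "\<forall>i<K. \<exists>B::real. \<forall>\<^sub>F P in at_top.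
     \<forall>F C Cinv Fh V U. 
       (let Nf = feedback_bits K M N P in
         trunc_unitary F ((K - 1) * M) N
         \<and> C \<in> carrier_mat N N \<and> Cinv \<in> carrier_mat N N
         \<and> C * Cinv = 1\<^sub>m N \<and> Cinv * C = 1\<^sub>m N
         \<and> herm (H_stack K N H i) = F * C
         \<and> Fh \<in> S Nf \<and> (\<forall>X\<in>S Nf. chordal_dist Fh F \<le> chordal_dist X F)
         \<and> (\<forall>j<K. trunc_unitary (V j) M d)
         \<and> trunc_unitary U N d
         \<and> herm U * herm Fh * V_minus K V i = 0\<^sub>m d ((K - 1) * d))
       \<longrightarrow> Re (leakage K d P H V (Cinv * herm F * Fh * U) i) \<le> B"
proof -
  obtain B where B: "\<forall>\<^sub>F P in at_top. \<forall>F Fh. trunc_unitary F ((K - 1) * M) N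
      \<and> nearest_codeword (S (feedback_bits K M N P)) F Fh \<longrightarrow> P * (chordal_dist Fh F)\<^sup>2 \<le> B"
    using quantization_error_bound[OF dims c_pos _ _ eps_small] codebook by blast
  let ?\<kappa> = "2 * real N * real (K - 1) * real d"
  show ?thesis
  proof (intro allI impI exI[of _ "?\<kappa> * B"]
      eventually_mono[OF eventually_conj[OF B eventually_ge_at_top[of 0]]])
    fix i P F C Cinv Fh V U
    assume i: "i < K"
      and quantization: "(\<forall>F Fh. trunc_unitary F ((K - 1) * M) N
        \<and> nearest_codeword (S (feedback_bits K M N P)) F Fh \<longrightarrow> P * (chordal_dist Fh F)\<^sup>2 \<le> B)
        \<and> 0 \<le> P"
      and scheme: "let Nf = feedback_bits K M N P in
         trunc_unitary F ((K - 1) * M) N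
         \<and> C \<in> carrier_mat N N \<and> Cinv \<in> carrier_mat N N
         \<and> C * Cinv = 1\<^sub>m N \<and> Cinv * C = 1\<^sub>m N
         \<and> herm (H_stack K N H i) = F * C
         \<and> Fh \<in> S Nf \<and> (\<forall>X\<in>S Nf. chordal_dist Fh F \<le> chordal_dist X F)
         \<and> (\<forall>j<K. trunc_unitary (V j) M d)
         \<and> trunc_unitary U N d
         \<and> herm U * herm Fh * V_minus K V i = 0\<^sub>m d ((K - 1) * d)"
    have P: "0 \<le> P" and quant: "P * (chordal_dist Fh F)\<^sup>2 \<le> B"
      using quantization scheme unfolding Let_def nearest_codeword_def by auto
    have Fh: "trunc_unitary Fh ((K - 1) * M) N"
      using scheme codebook unfolding Let_def by blast
    have "Re (leakage K d P H V (Cinv * herm F * Fh * U) i) \<le> ?\<kappa> * (P * (chordal_dist Fh F)\<^sup>2)"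
      using scheme unfolding Let_def by (intro leakage_le_chordal[OF i chan _ _ _ _ _ Fh _ _ _ P]) auto
    also have "\<dots> \<le> ?\<kappa> * B"
      using quant by (intro mult_left_mono) auto
    finally show "Re (leakage K d P H V (Cinv * herm F * Fh * U) i) \<le> ?\<kappa> * B" .
  qed
qed

end
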